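(* Let $k\ge 1$, $n=2^{k+1}$, and run Jakobsson's pebble-update procedure (with its $k+1$ pebbles) for exactly $n/2$ steps. Then every pebble that has not been discarded satisfies $\mathrm{Position}=\mathrm{Destination}$.
   Context: Jakobsson's pebble-update procedure (hash-chain preimage traversal). Fix $K\ge 1$ and $N=2^K$ (in the claim, $N=n$ and $K=k+1$). There are $K$ pebbles, identified by their initial label $j\in\{1,\dots,K\}$. Pebble $j$ has two fixed constants $S_j=3\cdot 2^j$ (start increment) and $D_j=2^{j+1}$ (destination increment), and two integer fields $\mathrm{Position}$ and $\mathrm{Destination}$ (which may be set to $+\infty$). Initially $\mathrm{Position}=\mathrm{Destination}=2^j$ for pebble $j$, and a counter $c$ equals $0$. The pebbles are kept sorted by $\mathrm{Position}$, and "the first pebble" means the pebble with the smallest $\mathrm{Position}$. One step: (i) if $c=N$, stop; otherwise $c\leftarrow c+1$; (ii) for every pebble with $\mathrm{Position}\ne\mathrm{Destination}$, set $\mathrm{Position}\leftarrow\mathrm{Position}-2$; (iii) if $c$ is even, the first pebble (say with initial label $j$) makes a backward move: $\mathrm{Position}\leftarrow \mathrm{Position}+S_j$, $\mathrm{Destination}\leftarrow\mathrm{Destination}+D_j$; if the new Destination exceeds $N$, both fields are set to $+\infty$ and the pebble is said to be discarded; then the pebbles are re-sorted by $\mathrm{Position}$. (Each pebble also stores a hash-chain value, which does not influence the evolution of the Position and Destination fields.) *)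

theory Defs
  imports Main "HOL-Library.Product_Lexorder"
begin

text \<open>A pebble: its initial label j, Position, Destination, and a flag recording
  whether it has been discarded (both fields set to +infinity).\<close>
record pebble =
  lbl  :: nat
  pos  :: int
  dst  :: int
  disc :: bool

text \<open>Sort key: discarded pebbles (Position = +infinity) come after all others.\<close>
definition peb_key :: "pebble \<Rightarrow> bool \<times> int" where
  "peb_key p = (disc p, pos p)"

definition peb_sort :: "pebble list \<Rightarrow> pebble list" where
  "peb_sort ps = sort_key peb_key ps"

definition init_pebbles :: "nat \<Rightarrow> pebble list" where
  "init_pebbles K =
     peb_sort (map (\<lambda>j. \<lparr>lbl = j, pos = 2 ^ j, dst = 2 ^ j, disc = False\<rparr>) [1..<K + 1])"

text \<open>Step (ii): every pebble with Position \<noteq> Destination moves 2 to the left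
  (discarded pebbles have Position = Destination = +infinity).\<close>
definition advance :: "pebble \<Rightarrow> pebble" where
  "advance p = (if \<not> disc p \<and> pos p \<noteq> dst p then p\<lparr>pos := pos p - 2\<rparr> else p)"

definition backward :: "nat \<Rightarrow> pebble \<Rightarrow> pebble" where
  "backward N p =
     (if disc p then p
      else if dst p + 2 ^ (lbl p + 1) > int N then p\<lparr>disc := True\<rparr>
      else p\<lparr>pos := pos p + 3 * 2 ^ lbl p, dst := dst p + 2 ^ (lbl p + 1)\<rparr>)"

definition peb_step :: "nat \<Rightarrow> nat \<times> pebble list \<Rightarrow> nat \<times> pebble list" where
  "peb_step N st =
     (let (c, ps) = st in
      if c = N then (c, ps)
      else
        let c' = c + 1;
            ps1 = peb_sort (map advance ps)
        in if even c' then
             (case ps1 of [] \<Rightarrow> (c', [])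
                        | p # rest \<Rightarrow> (c', peb_sort (backward N p # rest)))
           else (c', ps1))"

definition run_steps :: "nat \<Rightarrow> nat \<Rightarrow> nat \<times> pebble list" where
  "run_steps K m = (peb_step (2 ^ K) ^^ m) (0, init_pebbles K)"

end

theory Submission
  imports Defs "HOL-Library.Multiset"
begin

(* Call a non-discarded pebble with label j "on schedule" at time t if its
   destination is the odd multiple of 2^j in the window (t, t + 2^(j+1)] (and at most 2^K),
   and its position exceeds its destination by max 0 (2 (dst - t) - 3 2^j).  We show by
   induction on t that up to time 2^(K-1) all pebbles are on schedule (a pebble may be
   discarded only at the last step).  In a step to an even time t + 1 = 2^j (2m+1), the
   pebble with label j is exactly the one whose destination is t + 1; it alone stands at
   position t + 1, so it is the first pebble, and its backward move puts it on schedule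
   again.  All other pebbles simply walk two units towards their destinations.  Finally,
   at time 2^(K-1) the window arithmetic forces the excess of every scheduled pebble to 0. *)

lemma two_adic_decomposition:
  fixes n :: nat
  assumes "n > 0"
  shows "\<exists>j m. n = 2 ^ j * (2 * m + 1)"
  using assms
proof (induction n rule: less_induct)
  case (less n)
  show ?case
  proof (cases "even n")
    case True
    then obtain n' where n': "n = 2 * n'" by blast
    with less.prems less.IH[of n'] obtain j m where "n' = 2 ^ j * (2 * m + 1)" by auto
    with n' have "n = 2 ^ Suc j * (2 * m + 1)" by simp
    then show ?thesis by blast
  next
    case False
    then obtain m where "n = 2 ^ 0 * (2 * m + 1)" by (auto elim: oddE)
    then show ?thesis by blast
  qed
qed

lemma two_adic_exponent_unique:
  fixes a b :: int
  assumes "2 ^ i * (2 * a + 1) = 2 ^ j * (2 * b + 1)"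
  shows "i = j"
proof (rule ccontr)
  have less: False
    if eq: "2 ^ i * (2 * a + 1) = (2::int) ^ j * (2 * b + 1)" and "i < j" for i j a b
  proof -
    have "(2::int) ^ j = 2 ^ i * 2 ^ (j - i)"
      using \<open>i < j\<close> by (simp flip: power_add)
    with eq have "2 * a + 1 = 2 ^ (j - i) * (2 * b + 1)"
      by (simp add: mult.assoc)
    moreover have "even ((2::int) ^ (j - i))" using \<open>i < j\<close> by simp
    ultimately have "even (2 * a + 1)" by simp
    then show False by simp
  qed
  assume "i \<noteq> j"
  then show False
    using less[OF assms] less[OF assms[symmetric]] by (cases "i < j") auto
qed

(* If t + 1 is an odd multiple of d, it is the only odd multiple of d in the window
   (t, t + 2d]: this identifies the pebble whose destination is reached at time t + 1. *)
lemma odd_multiple_in_window: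
  fixes d t a m :: int
  assumes "d > 0" and "t < d * (2 * a + 1)" and "d * (2 * a + 1) \<le> t + 2 * d"
    and "t + 1 = d * (2 * m + 1)"
  shows "a = m"
proof -
  have "d * (2 * m + 1) \<le> d * (2 * a + 1)" using assms by linarith
  then have "2 * m + 1 \<le> 2 * a + 1" using assms(1) by simp
  moreover have "d * (2 * a + 1) < d * (2 * m + 3)" using assms by (simp add: algebra_simps)
  then have "2 * a + 1 < 2 * m + 3" using assms(1) by simp
  ultimately show ?thesis by simp
qed

(* An odd multiple 2^j (2m+1) <= 2^i whose successor odd multiple exceeds 2^(i+1) must
   equal 2^i.  This is why a pebble can only be discarded at the very last step. *)
lemma last_odd_multiple:
  fixes m :: int
  assumes "2 ^ j * (2 * m + 1) \<le> (2::int) ^ i" and "2 * 2 ^ i < (2::int) ^ j * (2 * m + 3)"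
    and "m \<ge> 0"
  shows "2 ^ j * (2 * m + 1) = (2::int) ^ i"
proof (cases "m = 0")
  case False
  then have "(2::int) ^ j * (2 * m + 3) \<le> 2 ^ j * (2 * (2 * m + 1))"
    using assms(3) by (intro mult_left_mono) auto
  then show ?thesis using assms by linarith
next
  case True
  with assms have "(2::int) ^ j \<le> 2 ^ i" and "2 * 2 ^ i < (2::int) ^ j * 3" by simp_all
  then have "j \<le> i" by simp
  moreover have "\<not> j < i"
  proof
    assume "j < i"
    then have "(2::int) ^ Suc j \<le> 2 ^ i" by (intro power_increasing) auto
    moreover have "(0::int) < 2 ^ j" by simp
    ultimately show False using \<open>2 * 2 ^ i < 2 ^ j * 3\<close> by simp
  qed
  ultimately show ?thesis using True by simp
qed

lemma peb_sort_head:
  assumes "p \<in> set xs" and "\<forall>q\<in>set xs. q \<noteq> p \<longrightarrow> peb_key p < peb_key q"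
  shows "\<exists>rest. peb_sort xs = p # rest"
proof -
  have sorted: "sorted (map peb_key (peb_sort xs))" and set_eq: "set (peb_sort xs) = set xs"
    unfolding peb_sort_def by simp_all
  then obtain y rest where y: "peb_sort xs = y # rest"
    using assms(1) by (cases "peb_sort xs") auto
  have "y = p"
  proof (rule ccontr)
    assume "y \<noteq> p"
    then have "peb_key p < peb_key y" and "p \<in> set rest"
      using assms set_eq y by auto
    moreover have "\<forall>z\<in>set rest. peb_key y \<le> peb_key z" using sorted y by simp
    ultimately show False by fastforce
  qed
  then show ?thesis using y by blast
qed

lemma set_peb_sort: "set (peb_sort xs) = set xs"
  by (simp add: peb_sort_def)

lemma advance_simps [simp]:
  "lbl (advance p) = lbl p" "dst (advance p) = dst p" "disc (advance p) = disc p"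
  by (simp_all add: advance_def)

lemma mset_labels_peb_sort: "mset (map lbl (peb_sort xs)) = mset (map lbl xs)"
  by (simp add: peb_sort_def mset_map)

lemma mset_labels_advance: "mset (map lbl (peb_sort (map advance ps))) = mset (map lbl ps)"
  unfolding mset_labels_peb_sort by (simp add: comp_def)

lemma peb_step_unfold:
  assumes "c \<noteq> N"
  shows "peb_step N (c, ps) =
    (c + 1, if even (c + 1)
            then (case peb_sort (map advance ps) of
                    [] \<Rightarrow> [] | p # rest \<Rightarrow> peb_sort (backward N p # rest))
            else peb_sort (map advance ps))"
  using assms by (simp add: peb_step_def Let_def split: list.split)

lemma mset_labels_peb_step:
  assumes "c \<noteq> N"
  shows "mset (map lbl (snd (peb_step N (c, ps)))) = mset (map lbl ps)"
proof -
  note advanced = mset_labels_advance[of ps]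
  have "mset (map lbl (peb_sort (backward N p # rest))) = mset (map lbl ps)"
    if "peb_sort (map advance ps) = p # rest" for p rest
    using advanced[unfolded that] unfolding mset_labels_peb_sort by (simp add: backward_def)
  then show ?thesis
    using advanced unfolding peb_step_unfold[OF assms] by (auto split: list.split)
qed

(* The invariant describing a non-discarded pebble with label j = lbl p at time t:
   its destination is an odd multiple of 2^j in the window (t, t + 2^(j+1)], at most 2^K,
   and its position lags behind in a prescribed way: it exceeds the destination by
   max 0 (2 (dst - t) - 3 2^j), the amount still to be walked off at speed 2. *)
definition on_schedule :: "nat \<Rightarrow> nat \<Rightarrow> pebble \<Rightarrow> bool" where
  "on_schedule K t p \<longleftrightarrow>
     \<not> disc p \<and> 1 \<le> lbl p \<and> lbl p \<le> K
     \<and> (\<exists>m. dst p = 2 ^ lbl p * (2 * m + 1))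
     \<and> int t < dst p \<and> dst p \<le> int t + 2 * 2 ^ lbl p \<and> dst p \<le> 2 ^ K
     \<and> pos p = dst p + max 0 (2 * (dst p - int t) - 3 * 2 ^ lbl p)"

(* Destinations of scheduled pebbles are even, so nothing arrives at an odd time. *)
lemma on_schedule_dst_even:
  assumes "on_schedule K t p"
  shows "even (dst p)"
proof -
  obtain m where "dst p = 2 ^ lbl p * (2 * m + 1)" and "1 \<le> lbl p"
    using assms unfolding on_schedule_def by blast
  then show ?thesis by simp
qed

(* Step (ii) on a scheduled pebble: the excess of the position over the destination is even,
   so one move of 2 turns the excess for time t into the excess for time t + 1. *)
lemma pos_advance:
  assumes "on_schedule K t p"
  shows "pos (advance p) = dst p + max 0 (2 * (dst p - int (t + 1)) - 3 * 2 ^ lbl p)"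
proof -
  obtain m where m: "dst p = 2 ^ lbl p * (2 * m + 1)" and "1 \<le> lbl p" and "\<not> disc p"
    and pos: "pos p = dst p + max 0 (2 * (dst p - int t) - 3 * 2 ^ lbl p)"
    using assms unfolding on_schedule_def by blast
  define e where "e = 2 * (dst p - int t) - 3 * 2 ^ lbl p"
  have "even ((2::int) ^ lbl p)" using \<open>1 \<le> lbl p\<close> by simp
  then have "even e" unfolding e_def m by simp
  show ?thesis
  proof (cases "e > 0")
    case True
    then have "e \<ge> 2" using \<open>even e\<close> by presburger
    then show ?thesis using pos \<open>\<not> disc p\<close> unfolding advance_def e_def by auto
  next
    case False
    then show ?thesis using pos \<open>\<not> disc p\<close> unfolding advance_def e_def by auto
  qed
qed

lemma on_schedule_advance:
  assumes "on_schedule K t p" and "dst p \<noteq> int (t + 1)"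
  shows "on_schedule K (t + 1) (advance p)"
  using assms pos_advance[OF assms(1)] unfolding on_schedule_def by auto

lemma advance_beyond_arrival:
  assumes "on_schedule K t p" and "dst p \<noteq> int (t + 1)"
  shows "int (t + 1) < pos (advance p)"
  using assms pos_advance[OF assms(1)] unfolding on_schedule_def by auto

(* At time t + 1 = 2^j (2m+1) the pebble with destination t + 1 is exactly the one with
   label j: uniqueness of the 2-adic exponent on one side, the window on the other. *)
lemma arrived_iff_label:
  assumes "on_schedule K t p" and "int t + 1 = 2 ^ j * (2 * m + 1)"
  shows "dst p = int t + 1 \<longleftrightarrow> lbl p = j"
proof -
  obtain a where a: "dst p = 2 ^ lbl p * (2 * a + 1)"
    and window: "int t < dst p" "dst p \<le> int t + 2 * 2 ^ lbl p"
    using assms(1) unfolding on_schedule_def by blast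
  show ?thesis
  proof
    assume "dst p = int t + 1"
    then show "lbl p = j" using a assms(2) two_adic_exponent_unique by metis
  next
    assume "lbl p = j"
    then have "a = m"
      using odd_multiple_in_window[of "2 ^ j" "int t" a m] a window assms(2) by simp
    then show "dst p = int t + 1" using a assms(2) \<open>lbl p = j\<close> by simp
  qed
qed

(* The pebble that arrives at t + 1 makes its backward move and is then on schedule for
   time t + 1 again (new destination t + 1 + 2^(j+1), position t + 1 + 3 2^j), unless it is
   discarded, which only happens when t + 1 = 2^(K-1). *)
lemma backward_after_arrival:
  assumes "K \<ge> 2" and sched: "on_schedule K t p" and arrived: "dst p = int (t + 1)"
    and "t + 1 \<le> 2 ^ (K - 1)"
  defines "q \<equiv> backward (2 ^ K) (advance p)"
  shows "on_schedule K (t + 1) q \<or> (disc q \<and> t + 1 = 2 ^ (K - 1))"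
proof -
  define j where "j = lbl p"
  obtain m where m: "dst p = 2 ^ j * (2 * m + 1)" and "\<not> disc p" and "1 \<le> j" "j \<le> K"
    using sched unfolding on_schedule_def j_def by blast
  have "0 < (2::int) ^ j * (2 * m + 1)" using m arrived by simp
  then have "m \<ge> 0" by (simp add: zero_less_mult_iff)
  have pos: "pos (advance p) = int (t + 1)"
    using pos_advance[OF sched] arrived by simp
  have half: "(2::int) ^ K = 2 * 2 ^ (K - 1)"
    using \<open>K \<ge> 2\<close> by (simp flip: power_Suc)
  have "int (t + 1) \<le> 2 ^ (K - 1)"
    using assms(4) by (metis of_nat_le_iff of_nat_numeral of_nat_power)
  show ?thesis
  proof (cases "dst p + 2 ^ (j + 1) > 2 ^ K")
    case True
    then have "2 * 2 ^ (K - 1) < (2::int) ^ j * (2 * m + 3)"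
      using m half by (simp add: algebra_simps)
    then have "2 ^ j * (2 * m + 1) = (2::int) ^ (K - 1)"
      using last_odd_multiple \<open>m \<ge> 0\<close> \<open>int (t + 1) \<le> 2 ^ (K - 1)\<close> arrived m by metis
    then have "t + 1 = 2 ^ (K - 1)"
      using arrived m by (metis of_nat_eq_iff of_nat_numeral of_nat_power)
    then show ?thesis using True \<open>\<not> disc p\<close> unfolding q_def backward_def j_def by simp
  next
    case False
    then have q: "\<not> disc q" "lbl q = j" "dst q = int (t + 1) + 2 * 2 ^ j"
      "pos q = int (t + 1) + 3 * 2 ^ j" "dst q \<le> 2 ^ K"
      using \<open>\<not> disc p\<close> pos arrived unfolding q_def backward_def j_def by auto
    have "dst q = 2 ^ j * (2 * (m + 1) + 1)"
      using q(3) arrived m by (simp add: algebra_simps)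
    then have "\<exists>m'. dst q = 2 ^ j * (2 * m' + 1)" by blast
    moreover have "int (t + 1) < dst q" "dst q \<le> int (t + 1) + 2 * 2 ^ j"
      and "pos q = dst q + max 0 (2 * (dst q - int (t + 1)) - 3 * 2 ^ j)"
      using q(3,4) by simp_all
    ultimately show ?thesis
      unfolding on_schedule_def q(2) using q(1,5) \<open>1 \<le> j\<close> \<open>j \<le> K\<close> by blast
  qed
qed

(* In a scheduled state with distinct labels, the pebble arriving at t + 1 sits at position
   t + 1 after step (ii) while all others are beyond it, so it is the first pebble; the
   remaining pebbles are advanced pebbles that did not arrive. *)
lemma arriving_pebble_first:
  assumes sched: "\<forall>p\<in>set ps. on_schedule K t p" and distinct: "distinct (map lbl ps)"
    and p: "p \<in> set ps" and arrived: "dst p = int (t + 1)"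
  shows "\<exists>rest. peb_sort (map advance ps) = advance p # rest
    \<and> (\<forall>r\<in>set rest. \<exists>p'\<in>set ps. dst p' \<noteq> int (t + 1) \<and> r = advance p')"
proof -
  obtain m where "dst p = 2 ^ lbl p * (2 * m + 1)"
    using sched p unfolding on_schedule_def by blast
  with arrived have m: "int t + 1 = 2 ^ lbl p * (2 * m + 1)" by simp
  have arrived_iff: "dst p' = int (t + 1) \<longleftrightarrow> lbl p' = lbl p" if "p' \<in> set ps" for p'
    using arrived_iff_label[OF sched[rule_format, OF that] m] by auto
  have ahead: "peb_key (advance p) < peb_key r"
    if r: "r \<in> set (map advance ps)" "r \<noteq> advance p" for r
  proof -
    obtain p' where p': "p' \<in> set ps" "r = advance p'" using r by auto
    then have "p' \<noteq> p" using r by auto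
    then have "lbl p' \<noteq> lbl p" using distinct p p' by (metis distinct_map inj_on_eq_iff)
    then have "dst p' \<noteq> int (t + 1)" using arrived_iff p' by simp
    then have "int (t + 1) < pos r"
      using advance_beyond_arrival[OF sched[rule_format, OF p'(1)]] p'(2) by simp
    moreover have "pos (advance p) = int (t + 1)"
      using pos_advance[OF sched[rule_format, OF p]] arrived by simp
    moreover have "\<not> disc r" "\<not> disc (advance p)"
      using sched p p' unfolding on_schedule_def by auto
    ultimately show ?thesis by (simp add: peb_key_def)
  qed
  obtain rest where rest: "peb_sort (map advance ps) = advance p # rest"
    using peb_sort_head[of "advance p" "map advance ps"] ahead p by auto
  have "distinct (map lbl (peb_sort (map advance ps)))"
    using distinct mset_eq_imp_distinct_iff[OF mset_labels_advance] by blast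
  then have other_labels: "lbl r \<noteq> lbl p" if "r \<in> set rest" for r
    using rest that by (auto simp: image_iff)
  have "\<exists>p'\<in>set ps. dst p' \<noteq> int (t + 1) \<and> r = advance p'" if r: "r \<in> set rest" for r
  proof -
    have "r \<in> set (peb_sort (map advance ps))" using rest r by simp
    then obtain p' where p': "p' \<in> set ps" "r = advance p'" by (auto simp: set_peb_sort)
    then show ?thesis using other_labels[OF r] arrived_iff by auto
  qed
  then show ?thesis using rest by blast
qed

definition on_schedule_state :: "nat \<Rightarrow> nat \<Rightarrow> pebble list \<Rightarrow> bool" where
  "on_schedule_state K t ps \<longleftrightarrow>
     mset (map lbl ps) = mset [1..<K + 1]
     \<and> (\<forall>p\<in>set ps. on_schedule K t p \<or> (disc p \<and> t = 2 ^ (K - 1)))"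

(* At an even time t + 1 <= 2^(K-1) some pebble arrives: writing t + 1 = 2^j (2m+1), the
   label j lies in 1..K-1 and that pebble's destination is t + 1. *)
lemma arriving_pebble_exists:
  assumes "K \<ge> 2" and labels: "mset (map lbl ps) = mset [1..<K + 1]"
    and sched: "\<forall>p\<in>set ps. on_schedule K t p"
    and "even (t + 1)" and "t + 1 \<le> 2 ^ (K - 1)"
  shows "\<exists>p\<in>set ps. dst p = int (t + 1)"
proof -
  obtain j m where jm: "t + 1 = 2 ^ j * (2 * m + 1)"
    using two_adic_decomposition[of "t + 1"] by auto
  then have "j \<noteq> 0" using \<open>even (t + 1)\<close> by auto
  have "2 ^ j * 1 \<le> t + 1" unfolding jm by (rule mult_le_mono2) simp
  then have "(2::nat) ^ j \<le> 2 ^ (K - 1)" using \<open>t + 1 \<le> 2 ^ (K - 1)\<close> by linarith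
  then have "j \<le> K - 1" by simp
  then have "j \<in> set (map lbl ps)"
    using mset_eq_setD[OF labels] \<open>j \<noteq> 0\<close> by auto
  then obtain p where p: "p \<in> set ps" "lbl p = j" by auto
  have "int t + 1 = 2 ^ j * (2 * int m + 1)"
    using arg_cong[OF jm, of int] by (simp add: algebra_simps)
  then have "dst p = int t + 1"
    using arrived_iff_label sched p by blast
  then have "dst p = int (t + 1)" by simp
  then show ?thesis using p(1) by blast
qed

lemma peb_step_on_schedule:
  assumes "K \<ge> 2" and state: "on_schedule_state K t ps" and "t < 2 ^ (K - 1)"
  shows "\<exists>ps'. peb_step (2 ^ K) (t, ps) = (t + 1, ps') \<and> on_schedule_state K (t + 1) ps'"
proof -
  have labels: "mset (map lbl ps) = mset [1..<K + 1]"
    and sched: "\<forall>p\<in>set ps. on_schedule K t p"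
    using state \<open>t < 2 ^ (K - 1)\<close> unfolding on_schedule_state_def by auto
  have "(2::nat) ^ (K - 1) \<le> 2 ^ K" by simp
  then have "t \<noteq> 2 ^ K" using \<open>t < 2 ^ (K - 1)\<close> by linarith
  define ps' where "ps' = snd (peb_step (2 ^ K) (t, ps))"
  have step: "peb_step (2 ^ K) (t, ps) = (t + 1, ps')"
    unfolding ps'_def peb_step_unfold[OF \<open>t \<noteq> 2 ^ K\<close>] by simp
  have "\<forall>q\<in>set ps'. on_schedule K (t + 1) q \<or> (disc q \<and> t + 1 = 2 ^ (K - 1))"
  proof (cases "even (t + 1)")
    case True
    then obtain p where p: "p \<in> set ps" "dst p = int (t + 1)"
      using arriving_pebble_exists[OF \<open>K \<ge> 2\<close> labels sched] \<open>t < 2 ^ (K - 1)\<close> by auto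
    have "distinct (map lbl ps)"
      using mset_eq_imp_distinct_iff[OF labels] by simp
    then obtain rest where rest: "peb_sort (map advance ps) = advance p # rest"
      and from_ps: "\<forall>r\<in>set rest. \<exists>p'\<in>set ps. dst p' \<noteq> int (t + 1) \<and> r = advance p'"
      using arriving_pebble_first[OF sched _ p] by blast
    have "ps' = peb_sort (backward (2 ^ K) (advance p) # rest)"
      unfolding ps'_def peb_step_unfold[OF \<open>t \<noteq> 2 ^ K\<close>] rest using True by simp
    then show ?thesis
      using backward_after_arrival[OF \<open>K \<ge> 2\<close> _ p(2)] on_schedule_advance from_ps sched p
        \<open>t < 2 ^ (K - 1)\<close>
      by (fastforce simp: set_peb_sort)
  next
    case False
    then have "dst p \<noteq> int (t + 1)" if "p \<in> set ps" for p
      using on_schedule_dst_even sched that by fastforce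
    moreover have "ps' = peb_sort (map advance ps)"
      unfolding ps'_def peb_step_unfold[OF \<open>t \<noteq> 2 ^ K\<close>] using False by simp
    ultimately show ?thesis
      using on_schedule_advance sched by (auto simp: set_peb_sort)
  qed
  moreover have "mset (map lbl ps') = mset [1..<K + 1]"
    unfolding ps'_def mset_labels_peb_step[OF \<open>t \<noteq> 2 ^ K\<close>] by (rule labels)
  ultimately show ?thesis using step unfolding on_schedule_state_def by blast
qed

lemma init_on_schedule: "on_schedule_state K 0 (init_pebbles K)"
proof -
  have "mset (map lbl (init_pebbles K)) = mset [1..<K + 1]"
    unfolding init_pebbles_def mset_labels_peb_sort by (simp add: comp_def)
  moreover have "on_schedule K 0 p" if p: "p \<in> set (init_pebbles K)" for p
  proof -
    obtain j where j: "1 \<le> j" "j \<le> K" "p = \<lparr>lbl = j, pos = 2 ^ j, dst = 2 ^ j, disc = False\<rparr>"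
      using p unfolding init_pebbles_def set_peb_sort by auto
    have "(2::int) ^ j \<le> 2 ^ K" using j(2) by simp
    moreover have "(2::int) ^ j = 2 ^ j * (2 * 0 + 1)" by simp
    ultimately show ?thesis unfolding on_schedule_def j(3) using j(1,2) by auto
  qed
  ultimately show ?thesis unfolding on_schedule_state_def by blast
qed

(* At time h = 2^(K-1) a scheduled pebble has reached its destination: for j <= K-2 the
   window forces dst = h + 2^j, and for j >= K-1 the bound dst <= 2^K = 2h suffices. *)
lemma on_schedule_halfway:
  assumes "K \<ge> 2" and sched: "on_schedule K (2 ^ (K - 1)) p"
  shows "pos p = dst p"
proof -
  define h :: int where "h = 2 ^ (K - 1)"
  define d :: int where "d = 2 ^ lbl p"
  obtain a where a: "dst p = d * (2 * a + 1)" and window: "h < dst p" "dst p \<le> h + 2 * d"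
    and "dst p \<le> 2 * h" and pos: "pos p = dst p + max 0 (2 * (dst p - h) - 3 * d)"
    using sched \<open>K \<ge> 2\<close> unfolding on_schedule_def h_def d_def
    by (auto simp flip: power_Suc)
  have "2 * (dst p - h) \<le> 3 * d"
  proof (cases "lbl p + 2 \<le> K")
    case True
    define e :: int where "e = 2 ^ (K - 2 - lbl p)"
    have "h = d * (2 * e)"
      using True unfolding h_def d_def e_def by (simp flip: power_add power_Suc)
    then have "d * (2 * e) < d * (2 * a + 1)" and "d * (2 * a + 1) \<le> d * (2 * e + 2)"
      using a window by (simp_all add: algebra_simps)
    moreover have "d > 0" unfolding d_def by simp
    ultimately have "2 * e < 2 * a + 1" and "2 * a + 1 \<le> 2 * e + 2" by simp_all
    then have "a = e" by simp
    then show ?thesis using a \<open>h = d * (2 * e)\<close> by (simp add: d_def algebra_simps)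
  next
    case False
    then have "2 ^ (K - 1) \<le> (2::int) ^ lbl p" by simp
    then have "h \<le> d" unfolding h_def d_def .
    moreover have "h > 0" unfolding h_def by simp
    ultimately show ?thesis using \<open>dst p \<le> 2 * h\<close> by simp
  qed
  then show ?thesis using pos by simp
qed

lemma run_steps_on_schedule:
  assumes "K \<ge> 2" and "t \<le> 2 ^ (K - 1)"
  shows "\<exists>ps. run_steps K t = (t, ps) \<and> on_schedule_state K t ps"
  using assms(2)
proof (induction t)
  case 0
  show ?case using init_on_schedule by (simp add: run_steps_def)
next
  case (Suc t)
  then obtain ps where ps: "run_steps K t = (t, ps)" "on_schedule_state K t ps" by auto
  have "run_steps K (Suc t) = peb_step (2 ^ K) (t, ps)"
    using ps(1) by (simp add: run_steps_def)
  then show ?case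
    using peb_step_on_schedule[OF assms(1) ps(2)] Suc.prems by auto
qed

theorem corollary1:
  fixes k n :: nat
  assumes "k \<ge> 1" and "n = 2 ^ (k + 1)"
  shows "\<forall>p \<in> set (snd (run_steps (k + 1) (n div 2))). \<not> disc p \<longrightarrow> pos p = dst p"
proof -
  have K: "k + 1 \<ge> 2" and half: "n div 2 = 2 ^ (k + 1 - 1)" using assms by simp_all
  obtain ps where "run_steps (k + 1) (n div 2) = (n div 2, ps)"
    and "on_schedule_state (k + 1) (2 ^ (k + 1 - 1)) ps"
    using run_steps_on_schedule[OF K] half by auto
  then show ?thesis
    using on_schedule_halfway[OF K] unfolding on_schedule_state_def by auto
qed

end
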